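(* Let $\{x_i\}_{i\in\mathcal{I}}$ and $\{y_i\}_{i\in\mathcal{I}}$ be two sequences of vectors in $\mathbb{R}^n$, $\mathcal{J}\subset\mathcal{I}$ a finite index subset, and $\lambda>0$. Let $A=\lambda I+\sum_{j\in\mathcal{J}}x_jx_j^\top$ and $B=\lambda I+\sum_{j\in\mathcal{J}}y_jy_j^\top$, and suppose $\mathrm{rank}(\{x_i\}_{i\in\mathcal{I}})=\mathrm{rank}(\{y_i\}_{i\in\mathcal{I}})=r$. Then for all $i\in\mathcal{I}$, $$\|x_i\|_{A^{-1}}\le\frac{1}{\sqrt\lambda}\|x_i-y_i\|_2+\left(1+\frac{2\sqrt r\sqrt{\sum_{j\in\mathcal{J}}\|x_j-y_j\|_2^2}}{\sqrt\lambda}\right)\|y_i\|_{B^{-1}}.$$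
   Context: For a positive definite matrix $M$, $\|x\|_M=\sqrt{x^\top Mx}$. *)

theory Defs
  imports "HOL-Analysis.Analysis"
begin

definition outer :: "real^'n \<Rightarrow> real^'n \<Rightarrow> real^'n^'n" where
  "outer u v = (\<chi> a b. u $ a * v $ b)"

definition mnorm :: "real^'n^'n \<Rightarrow> real^'n \<Rightarrow> real" where
  "mnorm M u = sqrt (u \<bullet> (M *v u))"

definition family_rank :: "('i \<Rightarrow> real^'n) \<Rightarrow> 'i set \<Rightarrow> nat" where
  "family_rank v I = dim (v ` I)"

end

theory Submission
  imports Defs
begin

text \<open>
  Let \<open>A\<close>, \<open>B\<close> be the two regularised Gram matrices, \<open>a = A\<inverse> v\<close>, \<open>b = B\<inverse> v\<close> and
  \<open>D = \<surd>(\<Sum>\<^sub>j \<parallel>x\<^sub>j - y\<^sub>j\<parallel>\<^sup>2)\<close>. Writing \<open>v = A a = B b\<close> gives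
  \<open>v\<^sup>T B\<inverse> v - v\<^sup>T A\<inverse> v = \<Sum>\<^sub>j (x\<^sub>j\<^sup>T a)(x\<^sub>j\<^sup>T b) - (y\<^sub>j\<^sup>T a)(y\<^sub>j\<^sup>T b)\<close>, and splitting this
  into two sums linear in \<open>x\<^sub>j - y\<^sub>j\<close>, Cauchy-Schwarz together with
  \<open>\<lambda> \<parallel>a\<parallel>\<^sup>2 \<le> v\<^sup>T A\<inverse> v\<close> and \<open>\<Sum>\<^sub>j (x\<^sub>j\<^sup>T a)\<^sup>2 \<le> v\<^sup>T A\<inverse> v\<close> (and likewise for \<open>B\<close>) bounds
  it by \<open>2 D/\<surd>\<lambda> \<parallel>v\<parallel>\<^sub>A\<^sub>\<inverse> \<parallel>v\<parallel>\<^sub>B\<^sub>\<inverse>\<close>. Solving this quadratic inequality yields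
  \<open>\<parallel>v\<parallel>\<^sub>A\<^sub>\<inverse> \<le> (1 + 2 D/\<surd>\<lambda>) \<parallel>v\<parallel>\<^sub>B\<^sub>\<inverse>\<close>. Applied to \<open>v = y\<^sub>i\<close> and combined with the
  triangle inequality \<open>\<parallel>x\<^sub>i\<parallel>\<^sub>A\<^sub>\<inverse> \<le> \<parallel>x\<^sub>i - y\<^sub>i\<parallel>/\<surd>\<lambda> + \<parallel>y\<^sub>i\<parallel>\<^sub>A\<^sub>\<inverse>\<close> (as \<open>A \<ge> \<lambda> I\<close>), this is
  the theorem with \<open>\<surd>r\<close> replaced by 1. The rank hypothesis is needed only for \<open>r = 0\<close>,
  where it forces \<open>y\<^sub>i = 0\<close>.
\<close>

definition reg_gram :: "real \<Rightarrow> ('i \<Rightarrow> real^'n) \<Rightarrow> 'i set \<Rightarrow> real^'n^'n" where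
  "reg_gram lam z J = lam *\<^sub>R mat 1 + (\<Sum>j\<in>J. outer (z j) (z j))"

lemma outer_mult_vec: "outer u w *v v = (w \<bullet> v) *\<^sub>R u"
  by (simp add: vec_eq_iff outer_def matrix_vector_mult_def inner_vec_def sum_distrib_left ac_simps)

lemma sum_matrix_vector_mult: "(\<Sum>j\<in>J. M j) *v v = (\<Sum>j\<in>J. M j *v v)"
  by (induction J rule: infinite_finite_induct) (auto simp: matrix_vector_mult_add_rdistrib)

lemma reg_gram_mult_vec: "reg_gram lam z J *v v = lam *\<^sub>R v + (\<Sum>j\<in>J. (z j \<bullet> v) *\<^sub>R z j)"
  by (simp add: reg_gram_def matrix_vector_mult_add_rdistrib sum_matrix_vector_mult outer_mult_vec
      scaleR_matrix_vector_assoc[symmetric])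

lemma inner_reg_gram:
  "w \<bullet> (reg_gram lam z J *v v) = lam * (w \<bullet> v) + (\<Sum>j\<in>J. (z j \<bullet> w) * (z j \<bullet> v))"
  by (simp add: reg_gram_mult_vec inner_add_right inner_sum_right inner_commute mult.commute)

lemma inner_reg_gram_self:
  "v \<bullet> (reg_gram lam z J *v v) = lam * (norm v)\<^sup>2 + (\<Sum>j\<in>J. (z j \<bullet> v)\<^sup>2)"
  by (simp add: inner_reg_gram power2_norm_eq_inner flip: power2_eq_square)

lemma invertible_reg_gram:
  assumes "lam > 0"
  shows "invertible (reg_gram lam z J)"
proof -
  have "v = 0" if "reg_gram lam z J *v v = 0" for v
  proof -
    have "lam * (norm v)\<^sup>2 + (\<Sum>j\<in>J. (z j \<bullet> v)\<^sup>2) = 0"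
      using that by (metis inner_reg_gram_self inner_zero_right)
    moreover have "0 \<le> (\<Sum>j\<in>J. (z j \<bullet> v)\<^sup>2)"
      by (simp add: sum_nonneg)
    moreover have "0 \<le> lam * (norm v)\<^sup>2"
      using assms by simp
    ultimately have "lam * (norm v)\<^sup>2 = 0"
      by linarith
    then show "v = 0"
      using assms by simp
  qed
  then show ?thesis
    using matrix_left_invertible_ker invertible_left_inverse by blast
qed

lemma matrix_vector_mul_matrix_inv:
  fixes A :: "'a::field^'n^'n"
  assumes "invertible A"
  shows "A *v (matrix_inv A *v v) = v"
proof -
  have "A ** matrix_inv A = mat 1"
    using someI_ex[OF assms[unfolded invertible_def]] by (simp add: matrix_inv_def)
  then show ?thesis
    by (metis matrix_vector_mul_assoc matrix_vector_mul_lid)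
qed

lemma inner_matrix_inv_reg_gram:
  fixes z :: "'i \<Rightarrow> real^'n" and J :: "'i set"
  assumes "lam > 0"
  defines "M \<equiv> matrix_inv (reg_gram lam z J)"
  shows "w \<bullet> (M *v v) = lam * ((M *v w) \<bullet> (M *v v)) + (\<Sum>j\<in>J. (z j \<bullet> (M *v w)) * (z j \<bullet> (M *v v)))"
proof -
  have "w = reg_gram lam z J *v (M *v w)"
    unfolding M_def by (simp add: matrix_vector_mul_matrix_inv invertible_reg_gram assms(1))
  then have "w \<bullet> (M *v v) = (M *v v) \<bullet> (reg_gram lam z J *v (M *v w))"
    by (metis inner_commute)
  then show ?thesis
    by (simp add: inner_reg_gram inner_commute mult.commute)
qed

lemma matrix_inv_reg_gram_symmetric:
  fixes z :: "'i \<Rightarrow> real^'n" and J :: "'i set"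
  assumes "lam > 0"
  defines "M \<equiv> matrix_inv (reg_gram lam z J)"
  shows "w \<bullet> (M *v v) = v \<bullet> (M *v w)"
  unfolding M_def inner_matrix_inv_reg_gram[OF assms(1), of w z J v]
    inner_matrix_inv_reg_gram[OF assms(1), of v z J w]
  by (simp add: inner_commute mult.commute)

lemma inner_matrix_inv_reg_gram_self:
  fixes z :: "'i \<Rightarrow> real^'n" and J :: "'i set"
  assumes "lam > 0"
  defines "M \<equiv> matrix_inv (reg_gram lam z J)"
  shows "v \<bullet> (M *v v) = lam * (norm (M *v v))\<^sup>2 + (\<Sum>j\<in>J. (z j \<bullet> (M *v v))\<^sup>2)"
  unfolding M_def inner_matrix_inv_reg_gram[OF assms(1), of v z J v]
  by (simp add: power2_norm_eq_inner flip: power2_eq_square)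

lemma inner_matrix_inv_reg_gram_nonneg:
  fixes z :: "'i \<Rightarrow> real^'n"
  assumes "lam > 0"
  shows "0 \<le> v \<bullet> (matrix_inv (reg_gram lam z J) *v v)"
  using assms by (simp add: inner_matrix_inv_reg_gram_self sum_nonneg)

lemma power2_mnorm_matrix_inv_reg_gram:
  fixes z :: "'i \<Rightarrow> real^'n"
  assumes "lam > 0"
  shows "(mnorm (matrix_inv (reg_gram lam z J)) v)\<^sup>2 = v \<bullet> (matrix_inv (reg_gram lam z J) *v v)"
  using inner_matrix_inv_reg_gram_nonneg[OF assms] by (simp add: mnorm_def)

lemma norm_matrix_inv_reg_gram_le:
  fixes z :: "'i \<Rightarrow> real^'n" and J :: "'i set"
  assumes "lam > 0"
  defines "M \<equiv> matrix_inv (reg_gram lam z J)"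
  shows "sqrt lam * norm (M *v v) \<le> mnorm M v"
proof -
  have "lam * (norm (M *v v))\<^sup>2 \<le> v \<bullet> (M *v v)"
    unfolding M_def inner_matrix_inv_reg_gram_self[OF assms(1)] by (simp add: sum_nonneg)
  then have "sqrt (lam * (norm (M *v v))\<^sup>2) \<le> mnorm M v"
    unfolding mnorm_def by (rule real_sqrt_le_mono)
  then show ?thesis
    by (simp add: real_sqrt_mult)
qed

lemma L2_set_inner_matrix_inv_reg_gram_le:
  fixes z :: "'i \<Rightarrow> real^'n" and J :: "'i set"
  assumes "lam > 0"
  defines "M \<equiv> matrix_inv (reg_gram lam z J)"
  shows "L2_set (\<lambda>j. z j \<bullet> (M *v v)) J \<le> mnorm M v"
  unfolding L2_set_def mnorm_def M_def inner_matrix_inv_reg_gram_self[OF assms(1)]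
  using assms(1) by (intro real_sqrt_le_mono) simp

lemma mnorm_matrix_inv_reg_gram_le:
  fixes z :: "'i \<Rightarrow> real^'n" and J :: "'i set"
  assumes "lam > 0"
  defines "M \<equiv> matrix_inv (reg_gram lam z J)"
  shows "mnorm M v \<le> norm v / sqrt lam"
proof -
  define s where "s = mnorm M v"
  have s_nonneg: "0 \<le> s"
    using inner_matrix_inv_reg_gram_nonneg[OF assms(1)] by (simp add: s_def mnorm_def M_def)
  have "s * s = v \<bullet> (M *v v)"
    unfolding s_def M_def power2_mnorm_matrix_inv_reg_gram[OF assms(1), symmetric]
    by (simp add: power2_eq_square)
  also have "\<dots> \<le> norm v * norm (M *v v)"
    by (rule norm_cauchy_schwarz)
  also have "\<dots> \<le> norm v * (s / sqrt lam)"
    using norm_matrix_inv_reg_gram_le[OF assms(1), of z J v] assms(1)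
    by (intro mult_left_mono) (simp_all add: s_def M_def field_simps)
  finally have "s * s \<le> s * (norm v / sqrt lam)"
    by (simp add: mult.commute)
  have "s \<le> norm v / sqrt lam"
  proof (cases "s = 0")
    case False
    with s_nonneg have "0 < s"
      by simp
    then show ?thesis
      using \<open>s * s \<le> s * (norm v / sqrt lam)\<close> by (rule mult_le_cancel_left_pos[THEN iffD1])
  qed (use assms(1) in simp)
  then show ?thesis
    by (simp add: s_def)
qed

lemma mnorm_matrix_inv_reg_gram_nonneg:
  fixes z :: "'i \<Rightarrow> real^'n"
  assumes "lam > 0"
  shows "0 \<le> mnorm (matrix_inv (reg_gram lam z J)) v"
  using inner_matrix_inv_reg_gram_nonneg[OF assms] by (simp add: mnorm_def)

lemma mnorm_matrix_inv_reg_gram_add_le: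
  fixes z :: "'i \<Rightarrow> real^'n" and J :: "'i set"
  assumes "lam > 0"
  defines "M \<equiv> matrix_inv (reg_gram lam z J)"
  shows "mnorm M (u + v) \<le> norm u / sqrt lam + mnorm M v"
proof -
  have sqrt_lam: "sqrt lam > 0"
    using assms(1) by simp
  have u_le: "mnorm M u \<le> norm u / sqrt lam"
    unfolding M_def by (rule mnorm_matrix_inv_reg_gram_le[OF assms(1)])
  have "u \<bullet> (M *v v) \<le> norm u * norm (M *v v)"
    by (rule norm_cauchy_schwarz)
  also have "\<dots> \<le> norm u * (mnorm M v / sqrt lam)"
    using norm_matrix_inv_reg_gram_le[OF assms(1), of z J v] sqrt_lam
    by (intro mult_left_mono) (simp_all add: M_def pos_le_divide_eq mult.commute)
  finally have cross_le: "u \<bullet> (M *v v) \<le> norm u * (mnorm M v / sqrt lam)" .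
  have sq: "(mnorm M w)\<^sup>2 = w \<bullet> (M *v w)" for w
    unfolding M_def by (rule power2_mnorm_matrix_inv_reg_gram[OF assms(1)])
  have "(mnorm M (u + v))\<^sup>2 = (mnorm M u)\<^sup>2 + 2 * (u \<bullet> (M *v v)) + (mnorm M v)\<^sup>2"
    using matrix_inv_reg_gram_symmetric[OF assms(1), of u z J v, folded M_def]
    by (simp add: sq matrix_vector_right_distrib inner_add_left inner_add_right)
  also have "\<dots> \<le> (norm u / sqrt lam)\<^sup>2 + 2 * (norm u * (mnorm M v / sqrt lam)) + (mnorm M v)\<^sup>2"
    using power_mono[OF u_le mnorm_matrix_inv_reg_gram_nonneg[OF assms(1), of z J u, folded M_def], of 2]
      cross_le
    by linarith
  also have "\<dots> = (norm u / sqrt lam + mnorm M v)\<^sup>2"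
    unfolding power2_sum by simp
  finally have "(mnorm M (u + v))\<^sup>2 \<le> (norm u / sqrt lam + mnorm M v)\<^sup>2" .
  moreover have "0 \<le> norm u / sqrt lam + mnorm M v"
    using mnorm_matrix_inv_reg_gram_nonneg[OF assms(1), of z J v, folded M_def] sqrt_lam by simp
  ultimately show ?thesis
    by (rule power2_le_imp_le)
qed

lemma abs_sum_mult_inner_le:
  fixes q :: "'i \<Rightarrow> 'a::real_inner"
  shows "\<bar>\<Sum>j\<in>J. p j * (q j \<bullet> c)\<bar> \<le> L2_set p J * L2_set (\<lambda>j. norm (q j)) J * norm c"
proof -
  have "\<bar>\<Sum>j\<in>J. p j * (q j \<bullet> c)\<bar> \<le> (\<Sum>j\<in>J. \<bar>p j * (q j \<bullet> c)\<bar>)"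
    by (rule sum_abs)
  also have "\<dots> \<le> (\<Sum>j\<in>J. \<bar>p j\<bar> * (norm (q j) * norm c))"
    by (intro sum_mono) (simp add: abs_mult mult_left_mono Cauchy_Schwarz_ineq2)
  also have "\<dots> = (\<Sum>j\<in>J. \<bar>p j\<bar> * \<bar>norm (q j)\<bar>) * norm c"
    by (simp add: sum_distrib_right mult.assoc)
  also have "\<dots> \<le> L2_set p J * L2_set (\<lambda>j. norm (q j)) J * norm c"
    by (intro mult_right_mono L2_set_mult_ineq) simp
  finally show ?thesis .
qed

lemma inner_matrix_inv_reg_gram_diff:
  fixes x y :: "'i \<Rightarrow> real^'n" and J :: "'i set" and v :: "real^'n"
  assumes "lam > 0"
  defines "a \<equiv> matrix_inv (reg_gram lam x J) *v v"
    and "b \<equiv> matrix_inv (reg_gram lam y J) *v v"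
  shows "v \<bullet> b - v \<bullet> a
    = (\<Sum>j\<in>J. (y j \<bullet> b) * ((x j - y j) \<bullet> a)) + (\<Sum>j\<in>J. (x j \<bullet> a) * ((x j - y j) \<bullet> b))"
proof -
  have "v \<bullet> a = a \<bullet> (reg_gram lam y J *v b)"
    by (simp add: b_def matrix_vector_mul_matrix_inv invertible_reg_gram assms(1) inner_commute)
  then have va: "v \<bullet> a = lam * (a \<bullet> b) + (\<Sum>j\<in>J. (y j \<bullet> a) * (y j \<bullet> b))"
    by (simp add: inner_reg_gram)
  have "v \<bullet> b = b \<bullet> (reg_gram lam x J *v a)"
    by (simp add: a_def matrix_vector_mul_matrix_inv invertible_reg_gram assms(1) inner_commute)
  then have vb: "v \<bullet> b = lam * (a \<bullet> b) + (\<Sum>j\<in>J. (x j \<bullet> a) * (x j \<bullet> b))"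
    by (simp add: inner_reg_gram inner_commute mult.commute)
  show ?thesis
    unfolding va vb
    by (simp add: sum.distrib[symmetric] sum_subtractf[symmetric] inner_diff_left algebra_simps)
qed

lemma le_of_power2_le_power2_add_mult:
  fixes s t d :: real
  assumes "0 \<le> t" and "0 \<le> d" and "s\<^sup>2 \<le> t\<^sup>2 + 2 * d * s * t"
  shows "s \<le> (1 + 2 * d) * t"
proof (cases "s \<le> t")
  case True
  moreover have "0 \<le> 2 * d * t"
    using assms(1,2) by simp
  ultimately show ?thesis
    by (simp add: algebra_simps)
next
  case False
  then have "t * t \<le> s * t"
    using assms(1) by (simp add: mult_right_mono)
  then have "s * s \<le> s * ((1 + 2 * d) * t)"
    using assms(3) by (simp add: power2_eq_square algebra_simps)
  moreover have "0 < s"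
    using False assms(1) by simp
  ultimately show ?thesis
    by (rule mult_le_cancel_left_pos[THEN iffD1, rotated])
qed

lemma mnorm_matrix_inv_reg_gram_perturb_le:
  fixes x y :: "'i \<Rightarrow> real^'n" and J :: "'i set"
  assumes "lam > 0"
  shows "mnorm (matrix_inv (reg_gram lam x J)) v
    \<le> (1 + 2 * (L2_set (\<lambda>j. norm (x j - y j)) J / sqrt lam)) * mnorm (matrix_inv (reg_gram lam y J)) v"
proof -
  define a where "a = matrix_inv (reg_gram lam x J) *v v"
  define b where "b = matrix_inv (reg_gram lam y J) *v v"
  define s where "s = mnorm (matrix_inv (reg_gram lam x J)) v"
  define t where "t = mnorm (matrix_inv (reg_gram lam y J)) v"
  define d where "d = L2_set (\<lambda>j. norm (x j - y j)) J / sqrt lam"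
  have s_nonneg: "0 \<le> s" and t_nonneg: "0 \<le> t" and d_nonneg: "0 \<le> d"
    using mnorm_matrix_inv_reg_gram_nonneg[OF assms] assms
    by (simp_all add: s_def t_def d_def L2_set_nonneg)
  have a_le: "norm a \<le> s / sqrt lam" and b_le: "norm b \<le> t / sqrt lam"
    using norm_matrix_inv_reg_gram_le[OF assms, of x J v] norm_matrix_inv_reg_gram_le[OF assms, of y J v] assms
    by (simp_all add: a_def b_def s_def t_def pos_le_divide_eq mult.commute)
  have "\<bar>\<Sum>j\<in>J. (y j \<bullet> b) * ((x j - y j) \<bullet> a)\<bar>
      \<le> L2_set (\<lambda>j. y j \<bullet> b) J * L2_set (\<lambda>j. norm (x j - y j)) J * norm a"
    by (rule abs_sum_mult_inner_le)
  also have "\<dots> \<le> t * L2_set (\<lambda>j. norm (x j - y j)) J * (s / sqrt lam)"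
    using L2_set_inner_matrix_inv_reg_gram_le[OF assms, of y J v] a_le t_nonneg
    by (intro mult_mono) (simp_all add: b_def t_def L2_set_nonneg)
  finally have first_le: "\<bar>\<Sum>j\<in>J. (y j \<bullet> b) * ((x j - y j) \<bullet> a)\<bar> \<le> d * s * t"
    by (simp add: d_def mult_ac)
  have "\<bar>\<Sum>j\<in>J. (x j \<bullet> a) * ((x j - y j) \<bullet> b)\<bar>
      \<le> L2_set (\<lambda>j. x j \<bullet> a) J * L2_set (\<lambda>j. norm (x j - y j)) J * norm b"
    by (rule abs_sum_mult_inner_le)
  also have "\<dots> \<le> s * L2_set (\<lambda>j. norm (x j - y j)) J * (t / sqrt lam)"
    using L2_set_inner_matrix_inv_reg_gram_le[OF assms, of x J v] b_le s_nonneg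
    by (intro mult_mono) (simp_all add: a_def s_def L2_set_nonneg)
  finally have second_le: "\<bar>\<Sum>j\<in>J. (x j \<bullet> a) * ((x j - y j) \<bullet> b)\<bar> \<le> d * s * t"
    by (simp add: d_def mult_ac)
  have "t\<^sup>2 - s\<^sup>2
    = (\<Sum>j\<in>J. (y j \<bullet> b) * ((x j - y j) \<bullet> a)) + (\<Sum>j\<in>J. (x j \<bullet> a) * ((x j - y j) \<bullet> b))"
    unfolding s_def t_def power2_mnorm_matrix_inv_reg_gram[OF assms] a_def b_def
    by (rule inner_matrix_inv_reg_gram_diff[OF assms])
  then have "s\<^sup>2 \<le> t\<^sup>2 + 2 * d * s * t"
    using first_le second_le by linarith
  then show ?thesis
    using le_of_power2_le_power2_add_mult[OF t_nonneg d_nonneg] by (simp add: s_def t_def d_def)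
qed

theorem lemma13:
  fixes x y :: "'i \<Rightarrow> real^'n" and I J :: "'i set" and lam :: real and r :: nat
  assumes "J \<subseteq> I" and "finite J" and "lam > 0"
    and "family_rank x I = r" and "family_rank y I = r"
  shows "\<forall>i\<in>I.
    mnorm (matrix_inv (lam *\<^sub>R mat 1 + (\<Sum>j\<in>J. outer (x j) (x j)))) (x i)
    \<le> norm (x i - y i) / sqrt lam
       + (1 + 2 * sqrt (real r) * sqrt (\<Sum>j\<in>J. (norm (x j - y j))\<^sup>2) / sqrt lam)
         * mnorm (matrix_inv (lam *\<^sub>R mat 1 + (\<Sum>j\<in>J. outer (y j) (y j)))) (y i)"
proof -
  define A where "A = matrix_inv (reg_gram lam x J)"
  define B where "B = matrix_inv (reg_gram lam y J)"
  define d where "d = L2_set (\<lambda>j. norm (x j - y j)) J / sqrt lam"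
  have "mnorm A (x i) \<le> norm (x i - y i) / sqrt lam + (1 + 2 * sqrt (real r) * d) * mnorm B (y i)"
    if "i \<in> I" for i
  proof -
    have "mnorm A (x i) \<le> norm (x i - y i) / sqrt lam + mnorm A (y i)"
      using mnorm_matrix_inv_reg_gram_add_le[OF assms(3), of x J "x i - y i" "y i"] by (simp add: A_def)
    moreover have "mnorm A (y i) \<le> (1 + 2 * sqrt (real r) * d) * mnorm B (y i)"
    proof (cases "r = 0")
      case True
      then have "y i = 0"
        using assms(5) that by (auto simp: family_rank_def)
      then show ?thesis
        by (simp add: mnorm_def)
    next
      case False
      then have "1 * d \<le> sqrt (real r) * d"
        using assms(3) by (intro mult_right_mono) (simp_all add: d_def L2_set_nonneg)
      then have "(1 + 2 * d) * mnorm B (y i) \<le> (1 + 2 * sqrt (real r) * d) * mnorm B (y i)"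
        using mnorm_matrix_inv_reg_gram_nonneg[OF assms(3)] by (intro mult_right_mono) (simp_all add: B_def)
      with mnorm_matrix_inv_reg_gram_perturb_le[OF assms(3)] show ?thesis
        unfolding A_def B_def d_def by (rule order_trans)
    qed
    ultimately show ?thesis
      by linarith
  qed
  then show ?thesis
    by (simp add: A_def B_def d_def L2_set_def reg_gram_def)
qed

end
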